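(* Let $G=(V,E)$ be a digraph with pairwise distinct vertices $a,b,1$ such that: (1) $1^+\neq\varnothing$; (2) there exists $a'\in V$ with $a^+\cap 1^-=\{a'\}$ and $a'^-\cap 1^-=\{a\}$; (3) $b\in 1^-$ and there exists $b'\in 1^-$ with $b'\in b^+$. Then $G$ is not congruence modular.
   Context: Digraphs are finite and loopless. For a vertex $x$, $x^+=\{v:(x,v)\in E\}$ and $x^-=\{v:(v,x)\in E\}$. A ternary polymorphism is a map $f:V^3\to V$ with $(f(a_1,a_2,a_3),f(b_1,b_2,b_3))\in E$ whenever all $(a_i,b_i)\in E$. $G$ is congruence modular if it has ternary polymorphisms $s_0,\dots,s_{2n},p$ (for some $n$) satisfying, for all vertices: $s_0(x,y,z)=x$; $s_i(x,y,x)=x$ for all $i\le 2n$; $s_i(x,y,y)=s_{i+1}(x,y,y)$ for even $i<2n$; $s_i(x,x,y)=s_{i+1}(x,x,y)$ for odd $i<2n$; $s_{2n}(x,y,y)=p(x,y,y)$; $p(x,x,y)=y$. *)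

theory Defs
  imports Main
begin

definition digraph :: "'a set \<Rightarrow> ('a \<times> 'a) set \<Rightarrow> bool" where
  "digraph V E \<longleftrightarrow> finite V \<and> E \<subseteq> V \<times> V \<and> (\<forall>x. (x, x) \<notin> E)"

definition out_nbrs :: "('a \<times> 'a) set \<Rightarrow> 'a \<Rightarrow> 'a set" where
  "out_nbrs E x = {v. (x, v) \<in> E}"

definition in_nbrs :: "('a \<times> 'a) set \<Rightarrow> 'a \<Rightarrow> 'a set" where
  "in_nbrs E x = {v. (v, x) \<in> E}"

text \<open>Ternary polymorphism: a map V^3 \<rightarrow> V preserving edges (only its values on V^3 matter).\<close>
definition ternary_polymorphism :: "'a set \<Rightarrow> ('a \<times> 'a) set \<Rightarrow> ('a \<Rightarrow> 'a \<Rightarrow> 'a \<Rightarrow> 'a) \<Rightarrow> bool" where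
  "ternary_polymorphism V E f \<longleftrightarrow>
     (\<forall>x\<in>V. \<forall>y\<in>V. \<forall>z\<in>V. f x y z \<in> V) \<and>
     (\<forall>a1 a2 a3 b1 b2 b3. (a1, b1) \<in> E \<longrightarrow> (a2, b2) \<in> E \<longrightarrow> (a3, b3) \<in> E \<longrightarrow>
        (f a1 a2 a3, f b1 b2 b3) \<in> E)"

text \<open>Congruence modularity via the Gumm-term style identities from the paper.\<close>
definition congruence_modular :: "'a set \<Rightarrow> ('a \<times> 'a) set \<Rightarrow> bool" where
  "congruence_modular V E \<longleftrightarrow>
    (\<exists>(n::nat) (s :: nat \<Rightarrow> 'a \<Rightarrow> 'a \<Rightarrow> 'a \<Rightarrow> 'a) p.
       (\<forall>i\<le>2*n. ternary_polymorphism V E (s i)) \<and> ternary_polymorphism V E p \<and>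
       (\<forall>x\<in>V. \<forall>y\<in>V. \<forall>z\<in>V. s 0 x y z = x) \<and>
       (\<forall>i\<le>2*n. \<forall>x\<in>V. \<forall>y\<in>V. s i x y x = x) \<and>
       (\<forall>i<2*n. even i \<longrightarrow> (\<forall>x\<in>V. \<forall>y\<in>V. s i x y y = s (Suc i) x y y)) \<and>
       (\<forall>i<2*n. odd i \<longrightarrow> (\<forall>x\<in>V. \<forall>y\<in>V. s i x x y = s (Suc i) x x y)) \<and>
       (\<forall>x\<in>V. \<forall>y\<in>V. s (2*n) x y y = p x y y) \<and>
       (\<forall>x\<in>V. \<forall>y\<in>V. p x x y = y))"

end

theory Submission
  imports Defs
begin

text \<open>
  Every Gumm term s_i is idempotent on 1 and preserves edges; from the edges a \<rightarrow> a' \<rightarrow> 1,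
  a \<rightarrow> 1, b \<rightarrow> b' \<rightarrow> 1, b \<rightarrow> 1 and 1 \<rightarrow> c together with the two uniqueness conditions
  around a' one gets s_i(a,a,b) = a \<longleftrightarrow> s_i(a,b,b) = a.  Walking along the chain of Gumm
  identities this yields p(a,b,b) = a.  But p(1,1,b') = b', so a \<rightarrow> b' with b' \<rightarrow> 1,
  forcing b' = a', and then b \<rightarrow> a' with b \<rightarrow> 1 forces b = a.
\<close>

definition gumm_terms ::
  "'a set \<Rightarrow> ('a \<times> 'a) set \<Rightarrow> nat \<Rightarrow> (nat \<Rightarrow> 'a \<Rightarrow> 'a \<Rightarrow> 'a \<Rightarrow> 'a) \<Rightarrow> ('a \<Rightarrow> 'a \<Rightarrow> 'a \<Rightarrow> 'a) \<Rightarrow> bool"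
  where
  "gumm_terms V E n s p \<longleftrightarrow>
     (\<forall>i\<le>2*n. ternary_polymorphism V E (s i)) \<and> ternary_polymorphism V E p \<and>
     (\<forall>x\<in>V. \<forall>y\<in>V. \<forall>z\<in>V. s 0 x y z = x) \<and>
     (\<forall>i\<le>2*n. \<forall>x\<in>V. \<forall>y\<in>V. s i x y x = x) \<and>
     (\<forall>i<2*n. even i \<longrightarrow> (\<forall>x\<in>V. \<forall>y\<in>V. s i x y y = s (Suc i) x y y)) \<and>
     (\<forall>i<2*n. odd i \<longrightarrow> (\<forall>x\<in>V. \<forall>y\<in>V. s i x x y = s (Suc i) x x y)) \<and>
     (\<forall>x\<in>V. \<forall>y\<in>V. s (2*n) x y y = p x y y) \<and>
     (\<forall>x\<in>V. \<forall>y\<in>V. p x x y = y)"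

lemma gumm_termsD:
  assumes "gumm_terms V E n s p"
  shows "\<And>i. i \<le> 2*n \<Longrightarrow> ternary_polymorphism V E (s i)"
    and "ternary_polymorphism V E p"
    and "\<And>x y z. x \<in> V \<Longrightarrow> y \<in> V \<Longrightarrow> z \<in> V \<Longrightarrow> s 0 x y z = x"
    and "\<And>i x y. i \<le> 2*n \<Longrightarrow> x \<in> V \<Longrightarrow> y \<in> V \<Longrightarrow> s i x y x = x"
    and "\<And>i x y. i < 2*n \<Longrightarrow> even i \<Longrightarrow> x \<in> V \<Longrightarrow> y \<in> V \<Longrightarrow> s i x y y = s (Suc i) x y y"
    and "\<And>i x y. i < 2*n \<Longrightarrow> odd i \<Longrightarrow> x \<in> V \<Longrightarrow> y \<in> V \<Longrightarrow> s i x x y = s (Suc i) x x y"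
    and "\<And>x y. x \<in> V \<Longrightarrow> y \<in> V \<Longrightarrow> s (2*n) x y y = p x y y"
    and "\<And>x y. x \<in> V \<Longrightarrow> y \<in> V \<Longrightarrow> p x x y = y"
  using assms unfolding gumm_terms_def by simp_all

lemma congruence_modular_iff_gumm_terms:
  "congruence_modular V E \<longleftrightarrow> (\<exists>n s p. gumm_terms V E n s p)"
  unfolding congruence_modular_def gumm_terms_def by (rule refl)

lemma ternary_polymorphism_edge:
  assumes "ternary_polymorphism V E f" "(x1, y1) \<in> E" "(x2, y2) \<in> E" "(x3, y3) \<in> E"
  shows "(f x1 x2 x3, f y1 y2 y3) \<in> E"
  using assms unfolding ternary_polymorphism_def by blast

lemma gumm_terms_last_fixes:
  assumes gt: "gumm_terms V E n s p" and V: "a \<in> V" "b \<in> V"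
    and iff: "\<And>i. i \<le> 2*n \<Longrightarrow> s i a a b = a \<longleftrightarrow> s i a b b = a"
  shows "p a b b = a"
proof -
  have "s i a b b = a" if "i \<le> 2*n" for i
    using that
  proof (induction i)
    case 0
    show ?case using gumm_termsD(3)[OF gt V(1,2,2)] .
  next
    case (Suc i)
    then have i: "i < 2*n" and IH: "s i a b b = a" by simp_all
    show ?case
    proof (cases "even i")
      case True
      then show ?thesis using gumm_termsD(5)[OF gt i True V] IH by simp
    next
      case False
      have "s (Suc i) a a b = s i a a b" using gumm_termsD(6)[OF gt i False V] by simp
      also have "\<dots> = a" using iff[of i] i IH by simp
      finally show ?thesis using iff[of "Suc i"] Suc.prems by simp
    qed
  qed
  then show ?thesis using gumm_termsD(7)[OF gt V] by simp
qed

lemma polymorphism_fixes_aab_iff_abb: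
  assumes f: "ternary_polymorphism V E f"
    and idem: "f one c one = one" "f one one one = one"
    and edges: "(a, a') \<in> E" "(a, one) \<in> E" "(a', one) \<in> E" "(b, one) \<in> E"
      "(b, b') \<in> E" "(b', one) \<in> E" "(one, c) \<in> E"
    and unique_out: "\<And>w. (a, w) \<in> E \<Longrightarrow> (w, one) \<in> E \<Longrightarrow> w = a'"
    and unique_in: "\<And>w. (w, a') \<in> E \<Longrightarrow> (w, one) \<in> E \<Longrightarrow> w = a"
  shows "f a a b = a \<longleftrightarrow> f a b b = a"
proof -
  note edge = ternary_polymorphism_edge[OF f]
  have mid: "(f a' one b', one) \<in> E" using edge[OF edges(3,7,6)] idem by simp
  have aab_mid: "(f a a b, f a' one b') \<in> E" using edge[OF edges(1,2,5)] .
  have abb_mid: "(f a b b, f a' one b') \<in> E" using edge[OF edges(1,4,5)] .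
  have aab_one: "(f a a b, one) \<in> E" using edge[OF edges(2,2,4)] idem by simp
  have abb_one: "(f a b b, one) \<in> E" using edge[OF edges(2,4,4)] idem by simp
  show ?thesis
  proof
    assume "f a a b = a"
    then have "f a' one b' = a'" using unique_out[OF _ mid] aab_mid by simp
    then show "f a b b = a" using unique_in[OF _ abb_one] abb_mid by simp
  next
    assume "f a b b = a"
    then have "f a' one b' = a'" using unique_out[OF _ mid] abb_mid by simp
    then show "f a a b = a" using unique_in[OF _ aab_one] aab_mid by simp
  qed
qed

theorem lemma7p1:
  fixes V :: "'a set" and E :: "('a \<times> 'a) set" and a b one :: 'a
  assumes "digraph V E"
    and "a \<in> V" "b \<in> V" "one \<in> V"
    and "a \<noteq> b" "a \<noteq> one" "b \<noteq> one"
    and "out_nbrs E one \<noteq> {}"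
    and "\<exists>a'\<in>V. out_nbrs E a \<inter> in_nbrs E one = {a'} \<and> in_nbrs E a' \<inter> in_nbrs E one = {a}"
    and "b \<in> in_nbrs E one"
    and "\<exists>b'\<in>in_nbrs E one. b' \<in> out_nbrs E b"
  shows "\<not> congruence_modular V E"
proof
  assume "congruence_modular V E"
  then obtain n s p where gt: "gumm_terms V E n s p"
    by (auto simp: congruence_modular_iff_gumm_terms)
  have EV: "E \<subseteq> V \<times> V" using assms(1) by (simp add: digraph_def)
  obtain c where ec: "(one, c) \<in> E" using assms(8) by (auto simp: out_nbrs_def)
  obtain a' where out_a: "out_nbrs E a \<inter> in_nbrs E one = {a'}"
    and in_a': "in_nbrs E a' \<inter> in_nbrs E one = {a}" using assms(9) by blast
  obtain b' where eb: "(b, b') \<in> E" "(b', one) \<in> E" "(b, one) \<in> E"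
    using assms(10,11) by (auto simp: out_nbrs_def in_nbrs_def)
  have ea: "(a, a') \<in> E" "(a, one) \<in> E" "(a', one) \<in> E"
    and unique_out: "\<And>w. (a, w) \<in> E \<Longrightarrow> (w, one) \<in> E \<Longrightarrow> w = a'"
    and unique_in: "\<And>w. (w, a') \<in> E \<Longrightarrow> (w, one) \<in> E \<Longrightarrow> w = a"
    using out_a in_a' by (auto simp: out_nbrs_def in_nbrs_def)
  have "p a b b = a"
  proof (rule gumm_terms_last_fixes[OF gt assms(2,3)])
    fix i assume i: "i \<le> 2*n"
    have "c \<in> V" using ec EV by blast
    then have "s i one c one = one" "s i one one one = one"
      using gumm_termsD(4)[OF gt i] assms(4) by simp_all
    then show "s i a a b = a \<longleftrightarrow> s i a b b = a"
      using polymorphism_fixes_aab_iff_abb[OF gumm_termsD(1)[OF gt i] _ _ ea eb(3,1,2) ec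
          unique_out unique_in] by blast
  qed
  moreover have "(p a b b, p one one b') \<in> E"
    using ternary_polymorphism_edge[OF gumm_termsD(2)[OF gt] ea(2) eb(3,1)] .
  moreover have "p one one b' = b'"
    using gumm_termsD(8)[OF gt assms(4)] eb(2) EV by blast
  ultimately have "b' = a'" using unique_out eb(2) by simp
  then have "b = a" using unique_in eb by blast
  with assms(5) show False by simp
qed

end
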